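(* Fix $X\in\mathcal{E}$ and let $I$ be the Daniell integral associated with $X$. Let $f\in\mathbb{L}$ have bounded support. Then there exists an open dense set $H\subseteq K$ such that $I(f)(\omega)=f(X(\omega))$ for every $\omega\in H$.
   Context: Let $\mathcal{E}$ be an order complete vector lattice with a weak order unit $E$, $K$ its Stone space (extremally disconnected compact Hausdorff), and $C^\infty(K)$ the vector lattice of continuous functions $K\to[-\infty,\infty]$ finite off a nowhere dense set (identified when equal off a nowhere dense set), which is the universal completion $\mathcal{E}^u$. Fix a Maeda–Ogasawara representation of $\mathcal{E}$ as an order dense ideal of $C^\infty(K)$ with $E$ corresponding to $\mathbf{1}$. For $Y\in\mathcal{E}$, $P_Y$ denotes the band projection onto the band generated by $Y$; in this representation $P_YE=\mathbf{1}_{\overline{\{Y\neq0\}}}$. Daniell calculus: $F(\mathbb{R})$ is the algebra of finite disjoint unions of intervals $(a,b]$, $(a,\infty)$, $(-\infty,b]$ ($a,b\in\mathbb{R}$), and $\mathbb{L}$ is the vector lattice of functions $f=\sum_{i=1}^n a_i\mathbf{1}_{S_i}$ with $a_i\in\mathbb{R}$ and $(S_i)$ a partition of $\mathbb{R}$ into sets of $F(\mathbb{R})$. For fixed $X\in\mathcal{E}$ the spectral system is $A_t=E-P_{(X-tE)^+}E$ ($t\in\mathbb{R}$), with $A_\infty=\sup_tA_t$, $A_{-\infty}=\inf_tA_t$; the measure $\mu_A$ is $\mu_A(a,b]=A_b-A_a$, $\mu_A(a,\infty)=A_\infty-A_a$, $\mu_A(-\infty,b]=A_b-A_{-\infty}$,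 extended additively to finite disjoint unions; and the Daniell integral associated with $X$ is $I(f)=\sum_i a_i\mu_A(S_i)$ for $f=\sum_ia_i\mathbf{1}_{S_i}\in\mathbb{L}$. *)

theory Defs
  imports "HOL-Analysis.Analysis"
begin

text \<open>K is modelled as a type of class t2_space with UNIV compact. Two continuous functions agreeing off a nowhere dense set
agree everywhere, so no quotient is needed.\<close>

definition extremally_disconnected :: "'a::topological_space itself \<Rightarrow> bool" where
  "extremally_disconnected _ \<longleftrightarrow> (\<forall>U::'a set. open U \<longrightarrow> open (closure U))"

definition Cinf :: "('a::topological_space \<Rightarrow> ereal) set" where
  "Cinf = {u. continuous_on UNIV u \<and> interior (closure {\<omega>. \<bar>u \<omega>\<bar> = \<infinity>}) = {}}"

definition cinf_add :: "('a::topological_space \<Rightarrow> ereal) \<Rightarrow> ('a \<Rightarrow> ereal) \<Rightarrow> ('a \<Rightarrow> ereal)" where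
  "cinf_add u v = (THE w. w \<in> Cinf \<and>
      (\<forall>\<omega>. \<bar>u \<omega>\<bar> \<noteq> \<infinity> \<and> \<bar>v \<omega>\<bar> \<noteq> \<infinity> \<longrightarrow> w \<omega> = u \<omega> + v \<omega>))"

definition cinf_scale :: "real \<Rightarrow> ('a \<Rightarrow> ereal) \<Rightarrow> ('a \<Rightarrow> ereal)" where
  "cinf_scale c u = (\<lambda>\<omega>. ereal c * u \<omega>)"

text \<open>A Maeda--Ogasawara representation: an order dense ideal of C^infty(K)
containing the constant function 1 (the image of the weak order unit E).\<close>

definition MO_representation :: "('a::topological_space \<Rightarrow> ereal) set \<Rightarrow> bool" where
  "MO_representation \<E> \<longleftrightarrow>
     \<E> \<subseteq> Cinf \<and> (\<lambda>_. 0) \<in> \<E> \<and>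
     (\<forall>u\<in>\<E>. \<forall>v\<in>\<E>. cinf_add u v \<in> \<E>) \<and>
     (\<forall>c. \<forall>u\<in>\<E>. cinf_scale c u \<in> \<E>) \<and>
     (\<forall>u\<in>Cinf. \<forall>v\<in>\<E>. (\<forall>\<omega>. \<bar>u \<omega>\<bar> \<le> \<bar>v \<omega>\<bar>) \<longrightarrow> u \<in> \<E>) \<and>
     (\<forall>u\<in>Cinf. (\<lambda>_. 0) < u \<longrightarrow> (\<exists>v\<in>\<E>. (\<lambda>_. 0) < v \<and> v \<le> u)) \<and>
     (\<lambda>_. 1) \<in> \<E>"

text \<open>Suprema and infima computed in the vector lattice \<E> (pointwise order
of representatives, which is the order of C^infty(K)).\<close>

definition is_sup_in :: "('a \<Rightarrow> ereal) set \<Rightarrow> ('a \<Rightarrow> ereal) set \<Rightarrow> ('a \<Rightarrow> ereal) \<Rightarrow> bool" where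
  "is_sup_in \<E> S u \<longleftrightarrow> u \<in> \<E> \<and> (\<forall>v\<in>S. v \<le> u) \<and> (\<forall>w\<in>\<E>. (\<forall>v\<in>S. v \<le> w) \<longrightarrow> u \<le> w)"

definition is_inf_in :: "('a \<Rightarrow> ereal) set \<Rightarrow> ('a \<Rightarrow> ereal) set \<Rightarrow> ('a \<Rightarrow> ereal) \<Rightarrow> bool" where
  "is_inf_in \<E> S u \<longleftrightarrow> u \<in> \<E> \<and> (\<forall>v\<in>S. u \<le> v) \<and> (\<forall>w\<in>\<E>. (\<forall>v\<in>S. w \<le> v) \<longrightarrow> w \<le> u)"

text \<open>Band projection of E onto the band generated by Y, in the representation:
P_Y E = indicator of the closure of the set where Y is nonzero.\<close>

definition bandproj_E :: "('a::topological_space \<Rightarrow> ereal) \<Rightarrow> ('a \<Rightarrow> ereal)" where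
  "bandproj_E Y = (\<lambda>\<omega>. ereal (indicator (closure {\<omega>. Y \<omega> \<noteq> 0}) \<omega>))"

definition shift_pos :: "('a \<Rightarrow> ereal) \<Rightarrow> real \<Rightarrow> ('a \<Rightarrow> ereal)" where
  "shift_pos X t = (\<lambda>\<omega>. max (X \<omega> - ereal t) 0)"

definition spec :: "('a::topological_space \<Rightarrow> ereal) \<Rightarrow> real \<Rightarrow> ('a \<Rightarrow> ereal)" where
  "spec X t = (\<lambda>\<omega>. 1 - bandproj_E (shift_pos X t) \<omega>)"

definition spec_top :: "('a::topological_space \<Rightarrow> ereal) set \<Rightarrow> ('a \<Rightarrow> ereal) \<Rightarrow> ('a \<Rightarrow> ereal)" where
  "spec_top \<E> X = (THE u. is_sup_in \<E> (range (spec X)) u)"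

definition spec_bot :: "('a::topological_space \<Rightarrow> ereal) set \<Rightarrow> ('a \<Rightarrow> ereal) \<Rightarrow> ('a \<Rightarrow> ereal)" where
  "spec_bot \<E> X = (THE u. is_inf_in \<E> (range (spec X)) u)"

datatype ivl = OC real real | Gt real | Le real

fun ivl_set :: "ivl \<Rightarrow> real set" where
  "ivl_set (OC a b) = {a<..b}"
| "ivl_set (Gt a) = {a<..}"
| "ivl_set (Le b) = {..b}"

fun ivl_valid :: "ivl \<Rightarrow> bool" where
  "ivl_valid (OC a b) = (a < b)"
| "ivl_valid (Gt a) = True"
| "ivl_valid (Le b) = True"

definition FR_decomp :: "real set \<Rightarrow> ivl list \<Rightarrow> bool" where
  "FR_decomp S js \<longleftrightarrow> (\<forall>j\<in>set js. ivl_valid j) \<and>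
     disjoint_family_on (\<lambda>k. ivl_set (js ! k)) {..<length js} \<and>
     S = (\<Union>k<length js. ivl_set (js ! k))"

definition FR :: "real set set" where
  "FR = {S. \<exists>js. FR_decomp S js}"

fun mu_ivl :: "('a::topological_space \<Rightarrow> ereal) set \<Rightarrow> ('a \<Rightarrow> ereal) \<Rightarrow> ivl \<Rightarrow> ('a \<Rightarrow> ereal)" where
  "mu_ivl \<E> X (OC a b) = (\<lambda>\<omega>. spec X b \<omega> - spec X a \<omega>)"
| "mu_ivl \<E> X (Gt a) = (\<lambda>\<omega>. spec_top \<E> X \<omega> - spec X a \<omega>)"
| "mu_ivl \<E> X (Le b) = (\<lambda>\<omega>. spec X b \<omega> - spec_bot \<E> X \<omega>)"

definition muA :: "('a::topological_space \<Rightarrow> ereal) set \<Rightarrow> ('a \<Rightarrow> ereal) \<Rightarrow> real set \<Rightarrow> ('a \<Rightarrow> ereal)" where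
  "muA \<E> X S = (let js = (SOME js. FR_decomp S js) in
      (\<lambda>\<omega>. \<Sum>k<length js. mu_ivl \<E> X (js ! k) \<omega>))"

definition L_repr :: "(real \<Rightarrow> real) \<Rightarrow> nat \<Rightarrow> (nat \<Rightarrow> real) \<Rightarrow> (nat \<Rightarrow> real set) \<Rightarrow> bool" where
  "L_repr f n a S \<longleftrightarrow> (\<forall>i<n. S i \<in> FR) \<and> disjoint_family_on S {..<n} \<and>
     (\<Union>i<n. S i) = UNIV \<and> f = (\<lambda>x. \<Sum>i<n. a i * indicator (S i) x)"

definition Lspace :: "(real \<Rightarrow> real) set" where
  "Lspace = {f. \<exists>n a S. L_repr f n a S}"

definition daniell_I :: "('a::topological_space \<Rightarrow> ereal) set \<Rightarrow> ('a \<Rightarrow> ereal) \<Rightarrow> (real \<Rightarrow> real) \<Rightarrow> ('a \<Rightarrow> ereal)" where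
  "daniell_I \<E> X f = (case (SOME (n, a, S). L_repr f n a S) of (n, a, S) \<Rightarrow>
      (\<lambda>\<omega>. \<Sum>i<n. ereal (a i) * muA \<E> X (S i) \<omega>))"

end

theory Submission
  imports Defs
begin

text \<open>Only finitely many thresholds t occur, namely the endpoints of the intervals
making up the pieces of f. In the representation, A_t is one minus the indicator of the
closure of the open set {t < X}, so it agrees with the indicator of {X \<le> t} on the open
dense set {t < X} \<union> -closure {t < X}. Intersecting these finitely many sets with the
complement of the closure of the nowhere dense set {|X| = \<infinity>} gives H. At a point of H,
\<mu>_A(c,d] is the indicator of {c < X \<le> d}; the pieces of f with nonzero coefficient lie in
its bounded support, so they are finite disjoint unions of such intervals, and I(f) sums up
to f(X).\<close>

lemma closure_Un_compl_closure: "closure (U \<union> - closure U) = UNIV"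
proof -
  have "- closure U \<subseteq> closure (- closure U)"
    using interior_subset[of "closure U"] by (auto simp: closure_complement)
  then have "closure U \<union> - closure U \<subseteq> closure (U \<union> - closure U)"
    by (metis closure_Un sup_mono order_refl)
  then show ?thesis by auto
qed

lemma dense_Int_open_dense:
  assumes "open A" "closure A = UNIV" "closure B = UNIV"
  shows "closure (A \<inter> B) = UNIV"
proof -
  have "A \<subseteq> closure (A \<inter> B)"
    using open_Int_closure_subset[OF assms(1), of B] assms(3) by simp
  then show ?thesis
    using assms(2) closure_minimal[of A "closure (A \<inter> B)"] by auto
qed

lemma dense_INT_open_dense:
  assumes "finite T" "\<And>t. t \<in> T \<Longrightarrow> open (G t)" "\<And>t. t \<in> T \<Longrightarrow> closure (G t) = UNIV"
  shows "closure (\<Inter>t\<in>T. G t) = UNIV"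
  using assms by (induction T rule: finite_induct) (simp_all add: dense_Int_open_dense)

definition regular_points :: "('a::topological_space \<Rightarrow> ereal) \<Rightarrow> real set \<Rightarrow> 'a set" where
  "regular_points X T = - closure {\<omega>. \<bar>X \<omega>\<bar> = \<infinity>} \<inter>
     (\<Inter>t\<in>T. {\<omega>. ereal t < X \<omega>} \<union> - closure {\<omega>. ereal t < X \<omega>})"

lemma open_superlevel_set:
  assumes "X \<in> Cinf"
  shows "open {\<omega>. ereal t < X \<omega>}"
  using assms by (intro open_Collect_less continuous_on_const) (simp add: Cinf_def)

lemma open_regular_points:
  assumes "X \<in> Cinf" "finite T"
  shows "open (regular_points X T)"
  unfolding regular_points_def using assms open_superlevel_set
  by (intro open_Int open_INT) auto

lemma dense_regular_points:
  assumes "X \<in> Cinf" "finite T"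
  shows "closure (regular_points X T) = UNIV"
proof -
  have "closure (- closure {\<omega>. \<bar>X \<omega>\<bar> = \<infinity>}) = UNIV"
    using assms(1) by (simp add: Cinf_def closure_complement)
  moreover have "closure (\<Inter>t\<in>T. {\<omega>. ereal t < X \<omega>} \<union> - closure {\<omega>. ereal t < X \<omega>}) = UNIV"
    using assms(2) open_superlevel_set[OF assms(1)] closure_Un_compl_closure
    by (intro dense_INT_open_dense) auto
  ultimately show ?thesis
    unfolding regular_points_def by (intro dense_Int_open_dense) auto
qed

lemma regular_point_finite: "\<omega> \<in> regular_points X T \<Longrightarrow> \<bar>X \<omega>\<bar> \<noteq> \<infinity>"
proof -
  assume "\<omega> \<in> regular_points X T"
  then have "\<omega> \<notin> closure {\<omega>. \<bar>X \<omega>\<bar> = \<infinity>}"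
    by (simp add: regular_points_def)
  then show ?thesis
    by (metis (mono_tags) closure_subset mem_Collect_eq subsetD)
qed

lemma shift_pos_neq_zero_iff: "shift_pos X t \<omega> \<noteq> 0 \<longleftrightarrow> ereal t < X \<omega>"
  by (cases "X \<omega>") (auto simp: shift_pos_def max_def)

lemma spec_at_regular_point:
  assumes "\<omega> \<in> regular_points X T" "t \<in> T"
  shows "spec X t \<omega> = (if t < real_of_ereal (X \<omega>) then 0 else 1)"
proof -
  let ?U = "{\<omega>. ereal t < X \<omega>}"
  obtain x where x: "X \<omega> = ereal x"
    using regular_point_finite[OF assms(1)] by (cases "X \<omega>") auto
  then have "\<omega> \<in> ?U \<longleftrightarrow> t < x" by simp
  moreover have "\<omega> \<in> closure ?U \<longleftrightarrow> \<omega> \<in> ?U"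
    using assms closure_subset[of ?U] by (auto simp: regular_points_def)
  ultimately show ?thesis
    by (simp add: x spec_def bandproj_E_def shift_pos_neq_zero_iff one_ereal_def)
qed

fun ivl_ends :: "ivl \<Rightarrow> real set" where
  "ivl_ends (OC a b) = {a, b}"
| "ivl_ends (Gt a) = {a}"
| "ivl_ends (Le b) = {b}"

text \<open>The endpoints of the decomposition of S that muA itself chooses.\<close>

definition FR_ends :: "real set \<Rightarrow> real set" where
  "FR_ends S = (let js = SOME js. FR_decomp S js in \<Union>k<length js. ivl_ends (js ! k))"

lemma finite_FR_ends: "finite (FR_ends S)"
proof -
  have "finite (ivl_ends j)" for j by (cases j) auto
  then show ?thesis by (simp add: FR_ends_def Let_def)
qed

lemma ivl_set_unbounded_unless_OC:
  assumes "bounded (ivl_set j)"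
  obtains c d where "j = OC c d"
proof -
  obtain B where B: "\<And>y. y \<in> ivl_set j \<Longrightarrow> \<bar>y\<bar> \<le> B"
    using assms by (auto simp: bounded_real)
  show ?thesis
  proof (cases j)
    case (Gt c)
    then have "\<bar>max c B + 1\<bar> \<le> B" by (intro B) auto
    then show ?thesis by linarith
  next
    case (Le c)
    then have "\<bar>min c (- B) - 1\<bar> \<le> B" by (intro B) auto
    then show ?thesis by linarith
  qed (use that in auto)
qed

lemma mu_ivl_at_regular_point:
  assumes "\<omega> \<in> regular_points X T" "ivl_ends j \<subseteq> T" "ivl_valid j" "bounded (ivl_set j)"
  shows "mu_ivl \<E> X j \<omega> = ereal (indicator (ivl_set j) (real_of_ereal (X \<omega>)))"
proof -
  obtain c d where j: "j = OC c d"
    using assms(4) by (rule ivl_set_unbounded_unless_OC)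
  then have "c < d" "spec X c \<omega> = (if c < real_of_ereal (X \<omega>) then 0 else 1)"
    "spec X d \<omega> = (if d < real_of_ereal (X \<omega>) then 0 else 1)"
    using assms(2,3) spec_at_regular_point[OF assms(1)] by auto
  then show ?thesis using j by (auto simp: indicator_def)
qed

lemma muA_at_regular_point:
  assumes "S \<in> FR" "bounded S" "FR_ends S \<subseteq> T" "\<omega> \<in> regular_points X T"
  shows "muA \<E> X S \<omega> = ereal (indicator S (real_of_ereal (X \<omega>)))"
proof -
  define js where "js = (SOME js. FR_decomp S js)"
  have "FR_decomp S js"
    using assms(1) unfolding FR_def js_def by (auto intro: someI_ex)
  then have valid: "\<And>k. k < length js \<Longrightarrow> ivl_valid (js ! k)"
    and disj: "disjoint_family_on (\<lambda>k. ivl_set (js ! k)) {..<length js}"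
    and S: "S = (\<Union>k<length js. ivl_set (js ! k))"
    unfolding FR_decomp_def by auto
  have ends: "ivl_ends (js ! k) \<subseteq> T" if "k < length js" for k
    using assms(3) that unfolding FR_ends_def js_def[symmetric] by auto
  have "bounded (ivl_set (js ! k))" if "k < length js" for k
    using assms(2) S that by (auto intro: bounded_subset)
  then have "muA \<E> X S \<omega> = (\<Sum>k<length js. ereal (indicator (ivl_set (js ! k)) (real_of_ereal (X \<omega>))))"
    unfolding muA_def js_def[symmetric] Let_def
    using assms(4) ends valid by (simp add: mu_ivl_at_regular_point)
  also have "\<dots> = ereal (indicator S (real_of_ereal (X \<omega>)))"
    by (simp add: S indicator_UN_disjoint[OF finite_lessThan disj])
  finally show ?thesis .
qed

lemma L_repr_eq_on_piece:
  assumes "L_repr f n a S" "i < n" "y \<in> S i"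
  shows "f y = a i"
proof -
  have f: "f y = (\<Sum>j<n. a j * indicator (S j) y)" and disj: "disjoint_family_on S {..<n}"
    using assms(1) by (auto simp: L_repr_def)
  have "y \<notin> S j" if "j < n" "j \<noteq> i" for j
    using disj assms(2,3) that unfolding disjoint_family_on_def by auto
  then have "(\<Sum>j<n. a j * indicator (S j) y) = (\<Sum>j\<in>{i}. a j * indicator (S j) y)"
    using assms(2) by (intro sum.mono_neutral_right) auto
  then show ?thesis using f assms(3) by simp
qed

lemma L_repr_piece_bounded:
  assumes "L_repr f n a S" "i < n" "a i \<noteq> 0" "bounded {x. f x \<noteq> 0}"
  shows "bounded (S i)"
  using assms L_repr_eq_on_piece[OF assms(1,2)] by (auto intro: bounded_subset)

lemma L_repr_sum_ereal:
  assumes "L_repr f n a S" "\<And>i. i < n \<Longrightarrow> a i \<noteq> 0 \<Longrightarrow> g i = ereal (indicator (S i) x)"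
  shows "(\<Sum>i<n. ereal (a i) * g i) = ereal (f x)"
proof -
  have "ereal (a i) * g i = ereal (a i * indicator (S i) x)" if "i < n" for i
    using assms(2)[OF that] by (cases "a i = 0") (auto simp: zero_ereal_def[symmetric])
  then show ?thesis using assms(1) by (simp add: L_repr_def)
qed

lemma daniell_I_repr:
  assumes "f \<in> Lspace"
  obtains n a S where "L_repr f n a S"
    and "daniell_I \<E> X f = (\<lambda>\<omega>. \<Sum>i<n. ereal (a i) * muA \<E> X (S i) \<omega>)"
proof -
  obtain p where "(\<lambda>(n, a, S). L_repr f n a S) p"
    using assms unfolding Lspace_def by auto
  then have "(\<lambda>(n, a, S). L_repr f n a S) (SOME (n, a, S). L_repr f n a S)"
    by (rule someI)
  then show ?thesis
    using that unfolding daniell_I_def by (auto split: prod.splits)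
qed

theorem mainTheorem4:
  fixes \<E> :: "('a::t2_space \<Rightarrow> ereal) set"
    and X :: "'a \<Rightarrow> ereal"
    and f :: "real \<Rightarrow> real"
  assumes "compact (UNIV :: 'a set)"
    and "extremally_disconnected TYPE('a)"
    and "MO_representation \<E>"
    and "X \<in> \<E>"
    and "f \<in> Lspace"
    and "bounded {x. f x \<noteq> 0}"
  shows "\<exists>H :: 'a set. open H \<and> closure H = UNIV \<and>
           (\<forall>\<omega>\<in>H. \<bar>X \<omega>\<bar> \<noteq> \<infinity> \<and>
                   daniell_I \<E> X f \<omega> = ereal (f (real_of_ereal (X \<omega>))))"
proof -
  have X: "X \<in> Cinf" using assms(3,4) by (auto simp: MO_representation_def)
  obtain n a S where rep: "L_repr f n a S"
    and I: "daniell_I \<E> X f = (\<lambda>\<omega>. \<Sum>i<n. ereal (a i) * muA \<E> X (S i) \<omega>)"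
    using assms(5) by (rule daniell_I_repr)
  define T where "T = (\<Union>i<n. FR_ends (S i))"
  have T: "finite T" by (simp add: T_def finite_FR_ends)
  have "daniell_I \<E> X f \<omega> = ereal (f (real_of_ereal (X \<omega>)))"
    if \<omega>: "\<omega> \<in> regular_points X T" for \<omega>
    unfolding I
  proof (rule L_repr_sum_ereal[OF rep])
    fix i assume "i < n" "a i \<noteq> 0"
    then show "muA \<E> X (S i) \<omega> = ereal (indicator (S i) (real_of_ereal (X \<omega>)))"
      using rep assms(6) \<omega> by (intro muA_at_regular_point L_repr_piece_bounded)
        (auto simp: L_repr_def T_def)
  qed
  then show ?thesis
    using open_regular_points[OF X T] dense_regular_points[OF X T]
    by (intro exI[of _ "regular_points X T"] conjI ballI) (simp_all add: regular_point_finite)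
qed

end
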